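(* Let $\mathcal{C}=\mathrm{CSS}(C_X,C_Z)$ be an $[[n,k,d]]_2$ CSS code exhibiting $(c_1,c_2,\epsilon_0)$-clustering, let $\epsilon<\frac{1}{1000}\min\{\frac{\epsilon_0}{2},\frac{c_2}{4c_1},\frac{d}{2c_1n}\}$ and $\epsilon'=1000\epsilon$. For $y\in G_Z^{\epsilon'}$ define $\mathrm{Cl}(y)=\{y'\in G_Z^{\epsilon'}:|y+y'|_{C_X^\perp}\le 2c_1\epsilon' n\}$. Then the sets $\mathrm{Cl}(y)$, $y\in G_Z^{\epsilon'}$, form a partition of $G_Z^{\epsilon'}$ (any two are equal or disjoint, and $y\in\mathrm{Cl}(y)$), and moreover: (1) any two distinct clusters $\mathrm{Cl}(y)\ne\mathrm{Cl}(y')$ satisfy $\mathrm{dis}(\mathrm{Cl}(y),\mathrm{Cl}(y'))\ge c_2n$; (2) for every $y\in G_Z^{\epsilon'}$ and $c\in C_Z$, $\mathrm{Cl}(y+c)=\mathrm{Cl}(y)+c$, and $\mathrm{Cl}(y+c)=\mathrm{Cl}(y)$ if and only if $c\in C_X^\perp$.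
   Context: Over $\mathbb{F}_2$: $C_X=\ker H_X$, $C_Z=\ker H_Z$, $H_X\in\mathbb{F}_2^{m_X\times n}$, $H_Z\in\mathbb{F}_2^{m_Z\times n}$, $C_X^\perp\subseteq C_Z$, distance $d=\min\{|y|:y\in(C_Z\setminus C_X^\perp)\cup(C_X\setminus C_Z^\perp)\}$. $|y|_C=\min_{y'\in C}|y+y'|$, $\mathrm{dis}(S,T)=\min_{s\in S,t\in T}|s-t|$, $G_X^\epsilon=\{y:|H_Xy|\le\epsilon m_X\}$, $G_Z^\epsilon=\{y:|H_Zy|\le\epsilon m_Z\}$. $(c_1,c_2,\epsilon_0)$-clustering: for all $0<\epsilon<\epsilon_0$, every $y\in G_X^\epsilon$ has $|y|_{C_Z^\perp}\le c_1\epsilon n$ or $\ge c_2 n$, and every $y\in G_Z^\epsilon$ has $|y|_{C_X^\perp}\le c_1\epsilon n$ or $\ge c_2n$. *)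

theory Defs
  imports Main "HOL-Library.Extended_Nat"
begin

text \<open>A vector y in F_2^n is represented by its support, a set
  y \<subseteq> {..<n}. Addition over F_2 is symmetric difference, Hamming weight is card.
  A matrix H in F_2^(m x n) is represented by the supports of its rows:
  H i \<subseteq> {..<n} is the support of row i, for i < m.\<close>

definition vecs :: "nat \<Rightarrow> nat set set" where
  "vecs n = Pow {..<n}"

definition vadd :: "nat set \<Rightarrow> nat set \<Rightarrow> nat set" where
  "vadd a b = (a - b) \<union> (b - a)"

definition syn :: "nat \<Rightarrow> (nat \<Rightarrow> nat set) \<Rightarrow> nat set \<Rightarrow> nat set" where
  "syn m H y = {i. i < m \<and> odd (card (H i \<inter> y))}"

definition kerH :: "nat \<Rightarrow> nat \<Rightarrow> (nat \<Rightarrow> nat set) \<Rightarrow> nat set set" where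
  "kerH n m H = {y \<in> vecs n. syn m H y = {}}"

definition dual :: "nat \<Rightarrow> nat set set \<Rightarrow> nat set set" where
  "dual n C = {y \<in> vecs n. \<forall>c\<in>C. even (card (y \<inter> c))}"

definition cwt :: "nat set set \<Rightarrow> nat set \<Rightarrow> nat" where
  "cwt C y = Min {card (vadd y y') | y'. y' \<in> C}"

definition dis :: "nat set set \<Rightarrow> nat set set \<Rightarrow> nat" where
  "dis S T = Min {card (vadd s t) | s t. s \<in> S \<and> t \<in> T}"

definition Gset :: "nat \<Rightarrow> nat \<Rightarrow> (nat \<Rightarrow> nat set) \<Rightarrow> real \<Rightarrow> nat set set" where
  "Gset n m H eps = {y \<in> vecs n. real (card (syn m H y)) \<le> eps * real m}"

text \<open>CSS code distance (infinity if there is no logical operator).\<close>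
definition css_dist :: "nat \<Rightarrow> nat \<Rightarrow> (nat \<Rightarrow> nat set) \<Rightarrow> nat \<Rightarrow> (nat \<Rightarrow> nat set) \<Rightarrow> enat" where
  "css_dist n mX HX mZ HZ =
     (INF y \<in> (kerH n mZ HZ - dual n (kerH n mX HX)) \<union> (kerH n mX HX - dual n (kerH n mZ HZ)).
        enat (card y))"

definition clustering :: "nat \<Rightarrow> nat \<Rightarrow> (nat \<Rightarrow> nat set) \<Rightarrow> nat \<Rightarrow> (nat \<Rightarrow> nat set)
    \<Rightarrow> real \<Rightarrow> real \<Rightarrow> real \<Rightarrow> bool" where
  "clustering n mX HX mZ HZ c1 c2 eps0 \<longleftrightarrow>
    (\<forall>eps. 0 < eps \<and> eps < eps0 \<longrightarrow>
      (\<forall>y \<in> Gset n mX HX eps.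
         real (cwt (dual n (kerH n mZ HZ)) y) \<le> c1 * eps * real n
       \<or> real (cwt (dual n (kerH n mZ HZ)) y) \<ge> c2 * real n) \<and>
      (\<forall>y \<in> Gset n mZ HZ eps.
         real (cwt (dual n (kerH n mX HX)) y) \<le> c1 * eps * real n
       \<or> real (cwt (dual n (kerH n mX HX)) y) \<ge> c2 * real n))"

definition cluster :: "nat \<Rightarrow> nat \<Rightarrow> (nat \<Rightarrow> nat set) \<Rightarrow> nat \<Rightarrow> (nat \<Rightarrow> nat set)
    \<Rightarrow> real \<Rightarrow> real \<Rightarrow> nat set \<Rightarrow> nat set set" where
  "cluster n mX HX mZ HZ c1 eps' y =
     {y' \<in> Gset n mZ HZ eps'.
        real (cwt (dual n (kerH n mX HX)) (vadd y y')) \<le> 2 * c1 * eps' * real n}"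

end

theory Submission imports Defs begin

text \<open>On G_Z^eps' the relation "|y + y'|_{C_X^perp} <= 2 c1 eps' n" is an equivalence:
  y + y' lies in G_Z^{2 eps'}, so by clustering its coset weight is either
  at most c1 (2 eps') n or at least c2 n, and the choice of eps leaves a gap between
  twice the first bound and the second, which forces transitivity. Points of distinct
  clusters are then at coset weight, hence Hamming distance, at least c2 n. Adding
  c \<in> C_Z preserves syndromes, so it translates clusters; it fixes a cluster only if
  |c|_{C_X^perp} <= 2 c1 eps' n < d, and an element of C_Z of coset weight below d
  lies in C_X^perp.\<close>

lemma vadd_commute: "vadd a b = vadd b a"
  unfolding vadd_def by blast

lemma vadd_self: "vadd a a = {}"
  unfolding vadd_def by blast

lemma vadd_empty_right: "vadd a {} = a"
  unfolding vadd_def by blast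

lemma vadd_vadd_cancel: "vadd (vadd a b) b = a"
  unfolding vadd_def by blast

lemma vadd_cancel_left: "vadd a (vadd a b) = b"
  unfolding vadd_def by blast

lemma Int_vadd_distrib: "X \<inter> vadd A B = vadd (X \<inter> A) (X \<inter> B)"
  unfolding vadd_def by blast

lemma card_Diff_add_card_Int: "finite A \<Longrightarrow> card (A - B) + card (A \<inter> B) = card A"
  using card_Un_disjoint[of "A - B" "A \<inter> B"] by (simp add: Un_Diff_Int Diff_Int_distrib2 Int_assoc)

lemma card_vadd:
  assumes "finite A" "finite B"
  shows "card (vadd A B) + 2 * card (A \<inter> B) = card A + card B"
proof -
  have "card (vadd A B) = card (A - B) + card (B - A)"
    unfolding vadd_def using assms by (subst card_Un_disjoint) auto
  then show ?thesis
    using assms card_Diff_add_card_Int[of A B] card_Diff_add_card_Int[of B A]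
    by (simp add: Int_commute)
qed

lemma card_vadd_le: "finite A \<Longrightarrow> finite B \<Longrightarrow> card (vadd A B) \<le> card A + card B"
  using card_vadd by (metis le_add1)

lemma even_card_vadd:
  "finite A \<Longrightarrow> finite B \<Longrightarrow> even (card (vadd A B)) \<longleftrightarrow> (even (card A) \<longleftrightarrow> even (card B))"
  using card_vadd[of A B] by (metis even_add even_mult_iff odd_one dvd_triv_left)

lemma finite_if_in_vecs: "a \<in> vecs n \<Longrightarrow> finite a"
  unfolding vecs_def by (auto intro: finite_subset)

lemma vadd_in_vecs: "a \<in> vecs n \<Longrightarrow> b \<in> vecs n \<Longrightarrow> vadd a b \<in> vecs n"
  unfolding vecs_def vadd_def by auto

lemma syn_vadd:
  assumes "finite a" "finite b"
  shows "syn m H (vadd a b) = vadd (syn m H a) (syn m H b)"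
proof -
  have "odd (card (H i \<inter> vadd a b)) \<longleftrightarrow> \<not> (odd (card (H i \<inter> a)) \<longleftrightarrow> odd (card (H i \<inter> b)))"
    for i using assms by (simp add: Int_vadd_distrib even_card_vadd)
  then show ?thesis
    unfolding syn_def vadd_def by auto
qed

lemma card_syn_vadd_le:
  assumes "finite a" "finite b"
  shows "card (syn m H (vadd a b)) \<le> card (syn m H a) + card (syn m H b)"
proof -
  have "finite (syn m H x)" for x
    unfolding syn_def by auto
  then show ?thesis
    using assms by (simp add: syn_vadd card_vadd_le)
qed

lemma vadd_in_kerH: "a \<in> kerH n m H \<Longrightarrow> b \<in> kerH n m H \<Longrightarrow> vadd a b \<in> kerH n m H"
  unfolding kerH_def by (auto simp: syn_vadd finite_if_in_vecs vadd_in_vecs vadd_empty_right)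

lemma vadd_in_dual:
  assumes "a \<in> dual n C" "b \<in> dual n C"
  shows "vadd a b \<in> dual n C"
proof -
  have "finite a" "finite b"
    using assms finite_if_in_vecs unfolding dual_def by auto
  moreover have "vadd a b \<inter> c = vadd (a \<inter> c) (b \<inter> c)" for c
    unfolding vadd_def by blast
  ultimately have "even (card (vadd a b \<inter> c))" if "c \<in> C" for c
    using assms that unfolding dual_def by (simp add: even_card_vadd)
  then show ?thesis
    using assms unfolding dual_def by (auto simp: vadd_in_vecs)
qed

lemma empty_in_dual: "{} \<in> dual n C"
  unfolding dual_def vecs_def by auto

lemma finite_dual: "finite (dual n C)"
  by (rule finite_subset[of _ "vecs n"]) (auto simp: dual_def vecs_def)

lemma cwt_le: "finite D \<Longrightarrow> z \<in> D \<Longrightarrow> cwt D y \<le> card (vadd y z)"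
  unfolding cwt_def by (rule Min_le) auto

lemma cwt_attained: "finite D \<Longrightarrow> D \<noteq> {} \<Longrightarrow> \<exists>z\<in>D. cwt D y = card (vadd y z)"
  unfolding cwt_def using Min_in[of "{card (vadd y y') | y'. y' \<in> D}"] by auto

lemma cwt_dual_attained:
  obtains z where "z \<in> dual n C" "cwt (dual n C) y = card (vadd y z)"
  using cwt_attained[OF finite_dual] empty_in_dual by blast

lemma cwt_empty: "cwt (dual n C) {} = 0"
  using cwt_le[OF finite_dual empty_in_dual, of n C "{}"] by (simp add: vadd_empty_right)

lemma cwt_le_card: "cwt (dual n C) y \<le> card y"
  using cwt_le[OF finite_dual empty_in_dual, of n C y] by (simp add: vadd_empty_right)

lemma cwt_vadd_le:
  assumes "a \<in> vecs n" "b \<in> vecs n"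
  shows "cwt (dual n C) (vadd a b) \<le> cwt (dual n C) a + cwt (dual n C) b"
proof -
  obtain za where za: "za \<in> dual n C" "cwt (dual n C) a = card (vadd a za)"
    by (rule cwt_dual_attained)
  obtain zb where zb: "zb \<in> dual n C" "cwt (dual n C) b = card (vadd b zb)"
    by (rule cwt_dual_attained)
  have "cwt (dual n C) (vadd a b) \<le> card (vadd (vadd a b) (vadd za zb))"
    by (rule cwt_le[OF finite_dual vadd_in_dual[OF za(1) zb(1)]])
  also have "vadd (vadd a b) (vadd za zb) = vadd (vadd a za) (vadd b zb)"
    unfolding vadd_def by blast
  also have "card \<dots> \<le> card (vadd a za) + card (vadd b zb)"
    using assms za(1) zb(1) unfolding dual_def
    by (intro card_vadd_le finite_if_in_vecs vadd_in_vecs) auto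
  finally show ?thesis
    using za zb by simp
qed

lemma cwt_vadd_dual_le:
  assumes "z \<in> dual n C"
  shows "cwt (dual n C) (vadd y z) \<le> cwt (dual n C) y"
proof -
  obtain w where w: "w \<in> dual n C" "cwt (dual n C) y = card (vadd y w)"
    by (rule cwt_dual_attained)
  have "cwt (dual n C) (vadd y z) \<le> card (vadd (vadd y z) (vadd z w))"
    by (rule cwt_le[OF finite_dual vadd_in_dual[OF assms w(1)]])
  also have "vadd (vadd y z) (vadd z w) = vadd y w"
    unfolding vadd_def by blast
  finally show ?thesis
    using w by simp
qed

lemma cwt_vadd_dual:
  assumes "z \<in> dual n C"
  shows "cwt (dual n C) (vadd y z) = cwt (dual n C) y"
  using cwt_vadd_dual_le[OF assms, of y] cwt_vadd_dual_le[OF assms, of "vadd y z"]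
  by (simp add: vadd_vadd_cancel)

lemma vadd_in_Gset_double:
  assumes "a \<in> Gset n m H e" "b \<in> Gset n m H e"
  shows "vadd a b \<in> Gset n m H (2 * e)"
proof -
  have "finite a" "finite b"
    using assms finite_if_in_vecs unfolding Gset_def by auto
  then have "card (syn m H (vadd a b)) \<le> card (syn m H a) + card (syn m H b)"
    by (rule card_syn_vadd_le)
  then show ?thesis
    using assms unfolding Gset_def by (auto simp: vadd_in_vecs)
qed

lemma vadd_kerH_in_Gset_iff:
  assumes "c \<in> kerH n m H"
  shows "vadd z c \<in> Gset n m H e \<longleftrightarrow> z \<in> Gset n m H e"
proof -
  have c: "c \<in> vecs n" "syn m H c = {}"
    using assms unfolding kerH_def by auto
  have "vadd z c \<in> vecs n \<longleftrightarrow> z \<in> vecs n"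
    using vadd_in_vecs[OF _ c(1)] by (metis vadd_vadd_cancel)
  moreover have "syn m H (vadd z c) = syn m H z" if "z \<in> vecs n"
    using that c by (simp add: syn_vadd finite_if_in_vecs vadd_empty_right)
  ultimately show ?thesis
    unfolding Gset_def by auto
qed

text \<open>An element of C_Z outside C_X^perp is a logical operator, and so is its sum with
  any element of C_X^perp; hence its coset weight is at least d.\<close>
lemma mem_dual_if_cwt_lt_css_dist:
  assumes css: "dual n (kerH n mX HX) \<subseteq> kerH n mZ HZ"
    and dist: "css_dist n mX HX mZ HZ = enat d"
    and c: "c \<in> kerH n mZ HZ"
    and small: "cwt (dual n (kerH n mX HX)) c < d"
  shows "c \<in> dual n (kerH n mX HX)"
proof (rule ccontr)
  let ?D = "dual n (kerH n mX HX)"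
  assume c_notin: "c \<notin> ?D"
  obtain w where w: "w \<in> ?D" "cwt ?D c = card (vadd c w)"
    by (rule cwt_dual_attained)
  have "vadd c w \<in> kerH n mZ HZ"
    using css w(1) c by (blast intro: vadd_in_kerH)
  moreover have "vadd c w \<notin> ?D"
    using vadd_in_dual[OF _ w(1), of "vadd c w"] c_notin by (auto simp: vadd_vadd_cancel)
  ultimately have "css_dist n mX HX mZ HZ \<le> enat (card (vadd c w))"
    unfolding css_dist_def by (intro INF_lower) blast
  then show False
    using dist w(2) small by simp
qed

lemma clustering_dichotomy_Z:
  assumes "clustering n mX HX mZ HZ c1 c2 eps0" "0 < e" "e < eps0" "y \<in> Gset n mZ HZ e"
  shows "real (cwt (dual n (kerH n mX HX)) y) \<le> c1 * e * real n
       \<or> real (cwt (dual n (kerH n mX HX)) y) \<ge> c2 * real n"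
  using assms unfolding clustering_def by blast

locale clustered_css =
  fixes n mX mZ :: nat and HX HZ :: "nat \<Rightarrow> nat set" and c1 c2 eps0 e :: real
  assumes clus: "clustering n mX HX mZ HZ c1 c2 eps0"
    and c1_pos: "0 < c1" and e_pos: "0 < e" and n_pos: "0 < n"
    and e_double: "2 * e < eps0"
    and e_gap: "4 * c1 * e < c2"
begin

abbreviation "D \<equiv> dual n (kerH n mX HX)"
abbreviation "G \<equiv> Gset n mZ HZ e"
abbreviation "Cl \<equiv> cluster n mX HX mZ HZ c1 e"

definition near :: "nat set \<Rightarrow> nat set \<Rightarrow> bool" where
  "near a b \<longleftrightarrow> real (cwt D (vadd a b)) \<le> 2 * c1 * e * real n"

lemma mem_cluster_iff: "y' \<in> Cl y \<longleftrightarrow> y' \<in> G \<and> near y y'"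
  unfolding cluster_def near_def by simp

lemma G_subset_vecs: "y \<in> G \<Longrightarrow> y \<in> vecs n"
  unfolding Gset_def by simp

lemma near_refl: "near a a"
  unfolding near_def using c1_pos e_pos by (simp add: vadd_self cwt_empty)

lemma near_sym: "near a b \<Longrightarrow> near b a"
  unfolding near_def by (simp add: vadd_commute)

lemma near_or_far:
  assumes "a \<in> G" "b \<in> G"
  shows "near a b \<or> real (cwt D (vadd a b)) \<ge> c2 * real n"
  using clustering_dichotomy_Z[OF clus _ e_double vadd_in_Gset_double[OF assms]] e_pos
  unfolding near_def by (simp add: algebra_simps)

lemma near_trans:
  assumes G: "a \<in> G" "b \<in> G" "c \<in> G" and ab: "near a b" and bc: "near b c"
  shows "near a c"
proof -
  have "vadd a c = vadd (vadd a b) (vadd b c)"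
    unfolding vadd_def by blast
  then have "cwt D (vadd a c) \<le> cwt D (vadd a b) + cwt D (vadd b c)"
    using cwt_vadd_le G G_subset_vecs vadd_in_vecs by metis
  then have "real (cwt D (vadd a c)) \<le> 4 * c1 * e * real n"
    using ab bc unfolding near_def by linarith
  also have "\<dots> < c2 * real n"
    using e_gap n_pos by simp
  finally show ?thesis
    using near_or_far[OF G(1,3)] by linarith
qed

lemma self_mem_cluster: "y \<in> G \<Longrightarrow> y \<in> Cl y"
  by (simp add: mem_cluster_iff near_refl)

lemma cluster_eqI: "y \<in> G \<Longrightarrow> y' \<in> G \<Longrightarrow> near y y' \<Longrightarrow> Cl y = Cl y'"
  unfolding mem_cluster_iff set_eq_iff by (meson near_sym near_trans)

lemma cluster_eq_or_disjoint:
  assumes "y \<in> G" "y' \<in> G"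
  shows "Cl y = Cl y' \<or> Cl y \<inter> Cl y' = {}"
proof (cases "Cl y \<inter> Cl y' = {}")
  case False
  then obtain z where "z \<in> G" "near y z" "near y' z"
    by (auto simp: mem_cluster_iff)
  then show ?thesis
    using assms by (meson cluster_eqI near_sym near_trans)
qed simp

lemma far_if_cluster_neq:
  assumes y: "y \<in> G" "y' \<in> G" and ne: "Cl y \<noteq> Cl y'"
    and st: "s \<in> Cl y" "t \<in> Cl y'"
  shows "c2 * real n \<le> real (card (vadd s t))"
proof -
  have s: "s \<in> G" "near y s" and t: "t \<in> G" "near y' t"
    using st by (auto simp: mem_cluster_iff)
  have "\<not> near s t"
    using cluster_eqI[OF y] ne near_sym near_trans s t y by meson
  then have "c2 * real n \<le> real (cwt D (vadd s t))"
    using near_or_far[OF s(1) t(1)] by simp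
  also have "\<dots> \<le> real (card (vadd s t))"
    by (simp add: cwt_le_card)
  finally show ?thesis .
qed

lemma dis_cluster_ge:
  assumes "y \<in> G" "y' \<in> G" "Cl y \<noteq> Cl y'"
  shows "c2 * real n \<le> real (dis (Cl y) (Cl y'))"
proof -
  let ?S = "{card (vadd s t) | s t. s \<in> Cl y \<and> t \<in> Cl y'}"
  have "finite (Cl x)" for x
    by (rule finite_subset[of _ "vecs n"]) (auto simp: cluster_def Gset_def vecs_def)
  moreover have "?S = (\<lambda>(s, t). card (vadd s t)) ` (Cl y \<times> Cl y')"
    by auto
  ultimately have "finite ?S"
    by simp
  moreover have "?S \<noteq> {}"
    using self_mem_cluster assms(1,2) by blast
  ultimately have "Min ?S \<in> ?S"
    by (rule Min_in)
  then obtain s t where "s \<in> Cl y" "t \<in> Cl y'" "Min ?S = card (vadd s t)"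
    by blast
  then show ?thesis
    unfolding dis_def using far_if_cluster_neq[OF assms] by simp
qed

lemma cluster_translate:
  assumes c: "c \<in> kerH n mZ HZ"
  shows "Cl (vadd y c) = (\<lambda>z. vadd z c) ` Cl y"
proof -
  have "vadd (vadd y c) x = vadd y (vadd x c)" for x
    unfolding vadd_def by blast
  then have "x \<in> Cl (vadd y c) \<longleftrightarrow> vadd x c \<in> Cl y" for x
    using vadd_kerH_in_Gset_iff[OF c] by (simp add: mem_cluster_iff near_def)
  moreover have "x \<in> (\<lambda>z. vadd z c) ` Cl y \<longleftrightarrow> vadd x c \<in> Cl y" for x
  proof
    show "vadd x c \<in> Cl y \<Longrightarrow> x \<in> (\<lambda>z. vadd z c) ` Cl y"
      by (rule rev_image_eqI[of "vadd x c"]) (simp_all add: vadd_vadd_cancel)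
  qed (auto simp: vadd_vadd_cancel)
  ultimately show ?thesis
    by blast
qed

lemma cluster_translate_eq_iff:
  assumes css: "D \<subseteq> kerH n mZ HZ" and dist: "css_dist n mX HX mZ HZ = enat d"
    and below_dist: "2 * c1 * e * real n < real d"
    and y: "y \<in> G" and c: "c \<in> kerH n mZ HZ"
  shows "Cl (vadd y c) = Cl y \<longleftrightarrow> c \<in> D"
proof
  assume "Cl (vadd y c) = Cl y"
  moreover have "vadd y c \<in> G"
    using vadd_kerH_in_Gset_iff[OF c] y by simp
  ultimately have "near y (vadd y c)"
    using self_mem_cluster mem_cluster_iff by blast
  then have "cwt D c < d"
    using below_dist unfolding near_def by (simp add: vadd_cancel_left)
  then show "c \<in> D"
    by (rule mem_dual_if_cwt_lt_css_dist[OF css dist c])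
next
  assume "c \<in> D"
  moreover have "vadd (vadd y c) z = vadd (vadd y z) c" for z
    unfolding vadd_def by blast
  ultimately have "near (vadd y c) z \<longleftrightarrow> near y z" for z
    unfolding near_def by (simp add: cwt_vadd_dual)
  then show "Cl (vadd y c) = Cl y"
    by (simp add: set_eq_iff mem_cluster_iff)
qed

end

theorem lemma4p10:
  fixes n mX mZ d :: nat and HX HZ :: "nat \<Rightarrow> nat set"
    and c1 c2 eps0 eps :: real
  assumes rowsX: "\<forall>i<mX. HX i \<subseteq> {..<n}"
    and rowsZ: "\<forall>i<mZ. HZ i \<subseteq> {..<n}"
    and css: "dual n (kerH n mX HX) \<subseteq> kerH n mZ HZ"
    and dist: "css_dist n mX HX mZ HZ = enat d"
    and c1_pos: "0 < c1" and c2_pos: "0 < c2" and eps0_pos: "0 < eps0"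
    and clus: "clustering n mX HX mZ HZ c1 c2 eps0"
    and eps_pos: "0 < eps"
    and eps_small: "eps < (1/1000) * min (min (eps0 / 2) (c2 / (4 * c1)))
                                          (real d / (2 * c1 * real n))"
  shows "(\<forall>y \<in> Gset n mZ HZ (1000 * eps).
            y \<in> cluster n mX HX mZ HZ c1 (1000 * eps) y)
       \<and> (\<forall>y \<in> Gset n mZ HZ (1000 * eps). \<forall>y' \<in> Gset n mZ HZ (1000 * eps).
            cluster n mX HX mZ HZ c1 (1000 * eps) y = cluster n mX HX mZ HZ c1 (1000 * eps) y'
          \<or> cluster n mX HX mZ HZ c1 (1000 * eps) y \<inter> cluster n mX HX mZ HZ c1 (1000 * eps) y' = {})
       \<and> (\<forall>y \<in> Gset n mZ HZ (1000 * eps). \<forall>y' \<in> Gset n mZ HZ (1000 * eps).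
            cluster n mX HX mZ HZ c1 (1000 * eps) y \<noteq> cluster n mX HX mZ HZ c1 (1000 * eps) y'
            \<longrightarrow> real (dis (cluster n mX HX mZ HZ c1 (1000 * eps) y)
                           (cluster n mX HX mZ HZ c1 (1000 * eps) y')) \<ge> c2 * real n)
       \<and> (\<forall>y \<in> Gset n mZ HZ (1000 * eps). \<forall>c \<in> kerH n mZ HZ.
            cluster n mX HX mZ HZ c1 (1000 * eps) (vadd y c)
              = (\<lambda>z. vadd z c) ` cluster n mX HX mZ HZ c1 (1000 * eps) y
          \<and> (cluster n mX HX mZ HZ c1 (1000 * eps) (vadd y c)
              = cluster n mX HX mZ HZ c1 (1000 * eps) y
             \<longleftrightarrow> c \<in> dual n (kerH n mX HX)))"
proof -
  have n_pos: "0 < n"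
    using eps_small eps_pos by (cases n) auto
  have e_facts: "2 * (1000 * eps) < eps0" "4 * c1 * (1000 * eps) < c2"
      "2 * c1 * (1000 * eps) * real n < real d"
    using eps_small c1_pos n_pos by (simp_all add: field_simps)
  interpret clustered_css n mX mZ HX HZ c1 c2 eps0 "1000 * eps"
    using clus c1_pos eps_pos n_pos e_facts(1,2) by unfold_locales simp_all
  show ?thesis
    using self_mem_cluster cluster_eq_or_disjoint dis_cluster_ge cluster_translate
      cluster_translate_eq_iff[OF css dist e_facts(3)]
    by simp
qed

end
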